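(* Let $\alpha,\beta\in L^2(\log L)^{1/4}(\mathbb{R}^2)$. Then $\alpha\beta\in L(\log L)^{1/2}(\mathbb{R}^2)$ and \[\|\alpha\beta\|_{1,1/2}\le 4\left(\max\{\|\alpha\|_{2,1/4},\|\beta\|_{2,1/4}\}\right)^2.\]
   Context: For $1\le p<\infty$ and $a\in\mathbb{R}$ let $A_{p,a}(s)=[s\log^a(2+s)]^p$ for $s>0$. The Zygmund space $L^p(\log L)^a(\mathbb{R}^2)$ is the set of $f\in L^1_{loc}(\mathbb{R}^2)$ with $\int_{\mathbb{R}^2}A_{p,a}(|f(x)|)\,dx<\infty$, normed by the Luxemburg norm $\|f\|_{p,a}=\inf\{k>0:\int A_{p,a}(|f(x)|/k)\,dx\le1\}$. $L(\log L)^{1/2}$ denotes $L^1(\log L)^{1/2}$. *)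

theory Defs
  imports "HOL-Analysis.Analysis"
begin

definition zyg_A :: "real \<Rightarrow> real \<Rightarrow> real \<Rightarrow> real" where
  "zyg_A p a s = (s * (ln (2 + s)) powr a) powr p"

definition in_zygmund :: "real \<Rightarrow> real \<Rightarrow> (real^2 \<Rightarrow> real) \<Rightarrow> bool" where
  "in_zygmund p a f \<longleftrightarrow>
     f \<in> borel_measurable lebesgue \<and>
     (\<forall>K. compact K \<longrightarrow> set_integrable lebesgue K f) \<and>
     (\<integral>\<^sup>+ x. ennreal (zyg_A p a \<bar>f x\<bar>) \<partial>lebesgue) < \<infinity>"

definition zyg_norm :: "real \<Rightarrow> real \<Rightarrow> (real^2 \<Rightarrow> real) \<Rightarrow> real" where
  "zyg_norm p a f = Inf {k. k > 0 \<and> (\<integral>\<^sup>+ x. ennreal (zyg_A p a (\<bar>f x\<bar> / k)) \<partial>lebesgue) \<le> 1}"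

end

theory Submission
  imports Defs
begin

text \<open>
  For 0 <= u <= v we have u v <= v^2 and ln (2 + u v) <= ln ((2 + v)^2) = 2 ln (2 + v), whence
  A_{1,1/2}(u v) <= 2 (A_{2,1/4}(u) + A_{2,1/4}(v)). If c exceeds both Luxemburg norms, apply this
  to u = |alpha|/2c and v = |beta|/2c and use A_{2,1/4}(s/2) <= A_{2,1/4}(s)/4: the modular of
  alpha beta/4c^2 is at most (1 + 1)/2 = 1, so the norm of alpha beta is at most 4c^2; now let
  c decrease to the larger norm. Local integrability of alpha beta holds because
  A_{1,1/2}(s) >= s sqrt (ln 2).
\<close>

definition zyg_modular :: "real \<Rightarrow> real \<Rightarrow> (real^2 \<Rightarrow> real) \<Rightarrow> real \<Rightarrow> ennreal" where
  "zyg_modular p a f k = (\<integral>\<^sup>+ x. ennreal (zyg_A p a (\<bar>f x\<bar> / k)) \<partial>lebesgue)"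

lemma zyg_norm_eq_Inf_modular:
  "zyg_norm p a f = Inf {k. k > 0 \<and> zyg_modular p a f k \<le> 1}"
  unfolding zyg_norm_def zyg_modular_def ..

lemma in_zygmund_iff_modular:
  "in_zygmund p a f \<longleftrightarrow>
     f \<in> borel_measurable lebesgue \<and>
     (\<forall>K. compact K \<longrightarrow> set_integrable lebesgue K f) \<and>
     zyg_modular p a f 1 < \<infinity>"
  unfolding in_zygmund_def zyg_modular_def by simp

lemma zyg_A_nonneg: "0 \<le> zyg_A p a s"
  by (simp add: zyg_A_def)

lemma borel_measurable_zyg_A [measurable]:
  "f \<in> borel_measurable M \<Longrightarrow> (\<lambda>x. zyg_A p a (f x)) \<in> borel_measurable M"
  unfolding zyg_A_def by measurable

lemma zyg_A_mono:
  assumes "0 \<le> p" "0 \<le> a" "0 \<le> s" "s \<le> t"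
  shows "zyg_A p a s \<le> zyg_A p a t"
proof -
  have "ln (2 + s) powr a \<le> ln (2 + t) powr a"
    using assms by (intro powr_mono2) auto
  then show ?thesis
    unfolding zyg_A_def using assms by (intro powr_mono2 mult_mono) auto
qed

lemma zyg_A_divide_le:
  assumes "0 \<le> p" "0 \<le> a" "0 \<le> s" "1 \<le> k"
  shows "zyg_A p a (s / k) \<le> zyg_A p a s / k powr p"
proof -
  have "s / k \<le> s" using assms by (simp add: divide_le_eq mult_le_cancel_left1)
  moreover have "0 \<le> s / k" using assms by simp
  ultimately have "ln (2 + s / k) \<le> ln (2 + s)" by (subst ln_le_cancel_iff) auto
  then have "zyg_A p a (s / k) \<le> (s / k * ln (2 + s) powr a) powr p"
    unfolding zyg_A_def using assms by (intro powr_mono2 mult_left_mono) auto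
  also have "\<dots> = zyg_A p a s / k powr p"
    unfolding zyg_A_def by (simp add: powr_divide)
  finally show ?thesis .
qed

lemma zyg_A_2_quarter:
  assumes "0 \<le> s" shows "zyg_A 2 (1/4) s = s\<^sup>2 * sqrt (ln (2 + s))"
proof -
  have "zyg_A 2 (1/4) s = s powr 2 * ln (2 + s) powr (1/2)"
    unfolding zyg_A_def using assms by (simp add: powr_mult powr_powr)
  then show ?thesis using assms by (simp add: powr_half_sqrt)
qed

lemma zyg_A_1_half: "0 \<le> s \<Longrightarrow> zyg_A 1 (1/2) s = s * sqrt (ln (2 + s))"
  by (simp add: zyg_A_def powr_half_sqrt)

lemma ln2_powr_mult_le_zyg_A_1:
  assumes "0 \<le> a" "0 \<le> s"
  shows "ln 2 powr a * s \<le> zyg_A 1 a s"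
proof -
  have "ln 2 powr a \<le> ln (2 + s) powr a"
    using assms by (intro powr_mono2) auto
  then show ?thesis
    unfolding zyg_A_def using assms by (simp add: mult.commute mult_left_mono)
qed

lemma zyg_A_1_half_mult_le_of_le:
  assumes "0 \<le> u" "u \<le> v"
  shows "zyg_A 1 (1/2) (u * v) \<le> 2 * zyg_A 2 (1/4) v"
proof -
  have uv: "u * v \<le> v\<^sup>2" using assms by (simp add: power2_eq_square mult_right_mono)
  then have "2 + u * v \<le> (2 + v)\<^sup>2"
    using assms by (simp add: power2_eq_square algebra_simps)
  then have "ln (2 + u * v) \<le> ln ((2 + v)\<^sup>2)"
    using assms by (subst ln_le_cancel_iff) (auto intro: add_pos_nonneg)
  also have "\<dots> = 2 * ln (2 + v)" using assms by (simp add: ln_realpow)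
  finally have "sqrt (ln (2 + u * v)) \<le> sqrt 2 * sqrt (ln (2 + v))"
    by (metis real_sqrt_le_mono real_sqrt_mult)
  also have "\<dots> \<le> 2 * sqrt (ln (2 + v))"
    using real_sqrt_le_mono[of 2 4] assms by (intro mult_right_mono) auto
  finally have "u * v * sqrt (ln (2 + u * v)) \<le> v\<^sup>2 * (2 * sqrt (ln (2 + v)))"
    using assms uv by (intro mult_mono) auto
  then show ?thesis using assms by (simp add: zyg_A_1_half zyg_A_2_quarter)
qed

lemma zyg_A_1_half_mult_le:
  assumes "0 \<le> u" "0 \<le> v"
  shows "zyg_A 1 (1/2) (u * v) \<le> 2 * (zyg_A 2 (1/4) u + zyg_A 2 (1/4) v)"
  using zyg_A_1_half_mult_le_of_le[of u v] zyg_A_1_half_mult_le_of_le[of v u] assms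
    zyg_A_nonneg[of 2 "1/4" u] zyg_A_nonneg[of 2 "1/4" v]
  by (cases "u \<le> v") (auto simp: mult.commute)

lemma zyg_A_1_half_mult_divide_le:
  assumes "0 < c"
  shows "zyg_A 1 (1/2) (\<bar>s * t\<bar> / (4 * c\<^sup>2))
    \<le> (zyg_A 2 (1/4) (\<bar>s\<bar> / c) + zyg_A 2 (1/4) (\<bar>t\<bar> / c)) / 2"
proof -
  have half: "zyg_A 2 (1/4) (r / 2) \<le> zyg_A 2 (1/4) r / 4" if "0 \<le> r" for r
    using zyg_A_divide_le[of 2 "1/4" r 2] that by simp
  have "\<bar>s * t\<bar> / (4 * c\<^sup>2) = (\<bar>s\<bar> / c / 2) * (\<bar>t\<bar> / c / 2)"
    by (simp add: abs_mult power2_eq_square)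
  then have "zyg_A 1 (1/2) (\<bar>s * t\<bar> / (4 * c\<^sup>2))
      \<le> 2 * (zyg_A 2 (1/4) (\<bar>s\<bar> / c / 2) + zyg_A 2 (1/4) (\<bar>t\<bar> / c / 2))"
    using zyg_A_1_half_mult_le[of "\<bar>s\<bar> / c / 2" "\<bar>t\<bar> / c / 2"] assms by simp
  also have "\<dots> \<le> 2 * (zyg_A 2 (1/4) (\<bar>s\<bar> / c) / 4 + zyg_A 2 (1/4) (\<bar>t\<bar> / c) / 4)"
    using assms by (intro mult_left_mono add_mono half) auto
  finally show ?thesis by simp
qed

lemma nn_integral_le_cmult_add:
  assumes "f \<in> borel_measurable M" "g \<in> borel_measurable M"
    and "\<And>x. 0 \<le> f x" "\<And>x. 0 \<le> g x" "0 \<le> C"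
    and "\<And>x. h x \<le> C * (f x + g x)"
  shows "(\<integral>\<^sup>+x. ennreal (h x) \<partial>M)
    \<le> ennreal C * ((\<integral>\<^sup>+x. ennreal (f x) \<partial>M) + (\<integral>\<^sup>+x. ennreal (g x) \<partial>M))"
proof -
  have "(\<integral>\<^sup>+x. ennreal (h x) \<partial>M) \<le> (\<integral>\<^sup>+x. ennreal C * (ennreal (f x) + ennreal (g x)) \<partial>M)"
  proof (rule nn_integral_mono)
    fix x
    have "ennreal (h x) \<le> ennreal (C * (f x + g x))" by (intro ennreal_leI assms(6))
    then show "ennreal (h x) \<le> ennreal C * (ennreal (f x) + ennreal (g x))"
      using assms(3-5) by (simp add: ennreal_mult'' flip: ennreal_plus)
  qed
  also have "\<dots> = ennreal C * ((\<integral>\<^sup>+x. ennreal (f x) \<partial>M) + (\<integral>\<^sup>+x. ennreal (g x) \<partial>M))"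
    using assms(1,2) by (simp add: nn_integral_cmult nn_integral_add)
  finally show ?thesis .
qed

lemma zyg_modular_mult_le:
  assumes "\<alpha> \<in> borel_measurable lebesgue" "\<beta> \<in> borel_measurable lebesgue"
  shows "zyg_modular 1 (1/2) (\<lambda>x. \<alpha> x * \<beta> x) 1
    \<le> 2 * (zyg_modular 2 (1/4) \<alpha> 1 + zyg_modular 2 (1/4) \<beta> 1)"
proof -
  have "zyg_modular 1 (1/2) (\<lambda>x. \<alpha> x * \<beta> x) 1
      \<le> ennreal 2 * (zyg_modular 2 (1/4) \<alpha> 1 + zyg_modular 2 (1/4) \<beta> 1)"
    unfolding zyg_modular_def
  proof (rule nn_integral_le_cmult_add)
    show "zyg_A 1 (1/2) (\<bar>\<alpha> x * \<beta> x\<bar> / 1)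
        \<le> 2 * (zyg_A 2 (1/4) (\<bar>\<alpha> x\<bar> / 1) + zyg_A 2 (1/4) (\<bar>\<beta> x\<bar> / 1))" for x
      using zyg_A_1_half_mult_le[of "\<bar>\<alpha> x\<bar>" "\<bar>\<beta> x\<bar>"] by (simp add: abs_mult)
  qed (use assms in \<open>auto simp: zyg_A_nonneg\<close>)
  then show ?thesis by simp
qed

lemma zyg_modular_mult_divide_le:
  assumes "\<alpha> \<in> borel_measurable lebesgue" "\<beta> \<in> borel_measurable lebesgue" "0 < c"
  shows "zyg_modular 1 (1/2) (\<lambda>x. \<alpha> x * \<beta> x) (4 * c\<^sup>2)
    \<le> (zyg_modular 2 (1/4) \<alpha> c + zyg_modular 2 (1/4) \<beta> c) / 2"
proof -
  have "zyg_modular 1 (1/2) (\<lambda>x. \<alpha> x * \<beta> x) (4 * c\<^sup>2)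
      \<le> ennreal (1/2) * (zyg_modular 2 (1/4) \<alpha> c + zyg_modular 2 (1/4) \<beta> c)"
    unfolding zyg_modular_def
  proof (rule nn_integral_le_cmult_add)
    show "zyg_A 1 (1/2) (\<bar>\<alpha> x * \<beta> x\<bar> / (4 * c\<^sup>2))
        \<le> 1/2 * (zyg_A 2 (1/4) (\<bar>\<alpha> x\<bar> / c) + zyg_A 2 (1/4) (\<bar>\<beta> x\<bar> / c))" for x
      using zyg_A_1_half_mult_divide_le[OF assms(3)] by simp
  qed (use assms in \<open>auto simp: zyg_A_nonneg\<close>)
  then show ?thesis by (simp add: divide_ennreal_def mult.commute)
qed

lemma zyg_modular_antimono:
  assumes "0 \<le> p" "0 \<le> a" "0 < k" "k \<le> k'"
  shows "zyg_modular p a f k' \<le> zyg_modular p a f k"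
  unfolding zyg_modular_def using assms
  by (intro nn_integral_mono ennreal_leI zyg_A_mono divide_left_mono) auto

lemma zyg_modular_divide_le:
  assumes "f \<in> borel_measurable lebesgue" "0 \<le> p" "0 \<le> a" "1 \<le> k"
  shows "zyg_modular p a f k \<le> ennreal (1 / k powr p) * zyg_modular p a f 1"
proof -
  have "zyg_modular p a f k \<le> (\<integral>\<^sup>+x. ennreal (1 / k powr p) * ennreal (zyg_A p a \<bar>f x\<bar>) \<partial>lebesgue)"
    unfolding zyg_modular_def
  proof (rule nn_integral_mono)
    fix x
    have "zyg_A p a (\<bar>f x\<bar> / k) \<le> 1 / k powr p * zyg_A p a \<bar>f x\<bar>"
      using zyg_A_divide_le[of p a "\<bar>f x\<bar>" k] assms by simp
    then show "ennreal (zyg_A p a (\<bar>f x\<bar> / k)) \<le> ennreal (1 / k powr p) * ennreal (zyg_A p a \<bar>f x\<bar>)"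
      by (simp add: ennreal_leI zyg_A_nonneg flip: ennreal_mult'')
  qed
  also have "\<dots> = ennreal (1 / k powr p) * zyg_modular p a f 1"
    unfolding zyg_modular_def using assms(1) by (simp add: nn_integral_cmult)
  finally show ?thesis .
qed

lemma in_zygmund_modular_le_oneE:
  assumes "in_zygmund p a f" "1 \<le> p" "0 \<le> a"
  obtains k where "0 < k" "zyg_modular p a f k \<le> 1"
proof -
  from assms(1) have f: "f \<in> borel_measurable lebesgue" and "zyg_modular p a f 1 < \<infinity>"
    by (auto simp: in_zygmund_iff_modular)
  then obtain r where r: "zyg_modular p a f 1 = ennreal r" "0 \<le> r"
    using less_top_ennreal by auto
  define k where "k = r + 1"
  have k: "1 \<le> k" "0 < k" using r(2) by (auto simp: k_def)
  have "r \<le> k powr p"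
    using powr_mono[OF assms(2) k(1)] by (simp add: k_def)
  then have "r / k powr p \<le> 1" using k by (simp add: divide_le_eq)
  moreover have "zyg_modular p a f k \<le> ennreal (r / k powr p)"
    using zyg_modular_divide_le[OF f _ _ k(1), of p a] assms r by (simp add: ennreal_mult'' flip: ennreal_mult)
  ultimately show ?thesis using that k(2) by (metis ennreal_le_1 order_trans)
qed

lemma zyg_norm_le:
  assumes "0 < c" "zyg_modular p a f c \<le> 1"
  shows "zyg_norm p a f \<le> c"
  unfolding zyg_norm_eq_Inf_modular using assms
  by (intro cInf_lower bdd_belowI[of _ 0]) auto

lemma zyg_norm_nonneg:
  assumes "in_zygmund p a f" "1 \<le> p" "0 \<le> a"
  shows "0 \<le> zyg_norm p a f"
proof -
  obtain k where "0 < k" "zyg_modular p a f k \<le> 1"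
    using in_zygmund_modular_le_oneE[OF assms] .
  then show ?thesis
    unfolding zyg_norm_eq_Inf_modular by (intro cInf_greatest) auto
qed

lemma zyg_modular_le_one_if_norm_less:
  assumes "in_zygmund p a f" "1 \<le> p" "0 \<le> a" "zyg_norm p a f < c"
  shows "zyg_modular p a f c \<le> 1"
proof -
  let ?K = "{k. 0 < k \<and> zyg_modular p a f k \<le> 1}"
  have "?K \<noteq> {}"
    using in_zygmund_modular_le_oneE[OF assms(1-3)] by blast
  moreover have "Inf ?K < c"
    using assms(4) by (simp add: zyg_norm_eq_Inf_modular)
  ultimately obtain k where "k \<in> ?K" "k < c"
    by (meson cInf_lessD)
  then have "zyg_modular p a f c \<le> zyg_modular p a f k"
    using assms(2,3) by (intro zyg_modular_antimono) auto
  with \<open>k \<in> ?K\<close> show ?thesis by (blast intro: order.trans)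
qed

lemma in_zygmund_1_if_modular_finite:
  assumes "g \<in> borel_measurable lebesgue" "0 \<le> a" "zyg_modular 1 a g 1 < \<infinity>"
  shows "in_zygmund 1 a g"
proof -
  have "(\<integral>\<^sup>+x. ennreal (norm (g x)) \<partial>lebesgue)
      \<le> (\<integral>\<^sup>+x. ennreal (1 / ln 2 powr a) * ennreal (zyg_A 1 a \<bar>g x\<bar>) \<partial>lebesgue)"
  proof (rule nn_integral_mono)
    fix x
    have "\<bar>g x\<bar> \<le> 1 / ln 2 powr a * zyg_A 1 a \<bar>g x\<bar>"
      using ln2_powr_mult_le_zyg_A_1[OF assms(2), of "\<bar>g x\<bar>"] by (simp add: field_simps)
    then show "ennreal (norm (g x)) \<le> ennreal (1 / ln 2 powr a) * ennreal (zyg_A 1 a \<bar>g x\<bar>)"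
      by (simp add: ennreal_leI zyg_A_nonneg flip: ennreal_mult'')
  qed
  also have "\<dots> = ennreal (1 / ln 2 powr a) * zyg_modular 1 a g 1"
    unfolding zyg_modular_def using assms(1) by (simp add: nn_integral_cmult)
  also have "\<dots> < \<infinity>"
    using assms(3) by (simp add: ennreal_mult_less_top)
  finally have "integrable lebesgue g"
    using assms(1) by (intro integrableI_bounded) auto
  then have "set_integrable lebesgue K g" if "compact K" for K
    unfolding set_integrable_def using that
    by (intro integrable_mult_indicator) (auto intro: fmeasurableD lmeasurable_compact)
  then show ?thesis
    using assms by (simp add: in_zygmund_iff_modular)
qed

lemma in_zygmund_mult:
  assumes "in_zygmund 2 (1/4) \<alpha>" "in_zygmund 2 (1/4) \<beta>"
  shows "in_zygmund 1 (1/2) (\<lambda>x. \<alpha> x * \<beta> x)"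
proof -
  from assms have \<alpha>: "\<alpha> \<in> borel_measurable lebesgue" "zyg_modular 2 (1/4) \<alpha> 1 < \<infinity>"
    and \<beta>: "\<beta> \<in> borel_measurable lebesgue" "zyg_modular 2 (1/4) \<beta> 1 < \<infinity>"
    by (auto simp: in_zygmund_iff_modular)
  have "zyg_modular 1 (1/2) (\<lambda>x. \<alpha> x * \<beta> x) 1 < \<infinity>"
    using \<alpha>(2) \<beta>(2)
    by (intro le_less_trans[OF zyg_modular_mult_le[OF \<alpha>(1) \<beta>(1)]]) (simp add: ennreal_mult_less_top)
  then show ?thesis
    using \<alpha>(1) \<beta>(1) by (intro in_zygmund_1_if_modular_finite) auto
qed

lemma zyg_norm_mult_le:
  assumes "in_zygmund 2 (1/4) \<alpha>" "in_zygmund 2 (1/4) \<beta>"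
    and "zyg_norm 2 (1/4) \<alpha> < c" "zyg_norm 2 (1/4) \<beta> < c"
  shows "zyg_norm 1 (1/2) (\<lambda>x. \<alpha> x * \<beta> x) \<le> 4 * c\<^sup>2"
proof (rule zyg_norm_le)
  have c: "0 < c" using zyg_norm_nonneg[OF assms(1)] assms(3) by simp
  have "zyg_modular 1 (1/2) (\<lambda>x. \<alpha> x * \<beta> x) (4 * c\<^sup>2)
      \<le> (zyg_modular 2 (1/4) \<alpha> c + zyg_modular 2 (1/4) \<beta> c) / 2"
    using assms(1,2) c by (intro zyg_modular_mult_divide_le) (auto simp: in_zygmund_iff_modular)
  also have "\<dots> \<le> (1 + 1) / 2"
    using assms by (intro divide_right_mono_ennreal add_mono zyg_modular_le_one_if_norm_less) auto
  finally show "zyg_modular 1 (1/2) (\<lambda>x. \<alpha> x * \<beta> x) (4 * c\<^sup>2) \<le> 1"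
    by (simp add: ennreal_divide_self)
  show "0 < 4 * c\<^sup>2" using c by simp
qed

theorem lemma4p1:
  fixes \<alpha> \<beta> :: "real^2 \<Rightarrow> real"
  assumes "in_zygmund 2 (1/4) \<alpha>" and "in_zygmund 2 (1/4) \<beta>"
  shows "in_zygmund 1 (1/2) (\<lambda>x. \<alpha> x * \<beta> x) \<and>
         zyg_norm 1 (1/2) (\<lambda>x. \<alpha> x * \<beta> x)
           \<le> 4 * (max (zyg_norm 2 (1/4) \<alpha>) (zyg_norm 2 (1/4) \<beta>))\<^sup>2"
proof
  show "in_zygmund 1 (1/2) (\<lambda>x. \<alpha> x * \<beta> x)"
    using assms by (rule in_zygmund_mult)
  define N where "N = max (zyg_norm 2 (1/4) \<alpha>) (zyg_norm 2 (1/4) \<beta>)"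
  have "((\<lambda>c. 4 * c\<^sup>2) \<longlongrightarrow> 4 * N\<^sup>2) (at_right N)"
    by (intro tendsto_intros)
  then show "zyg_norm 1 (1/2) (\<lambda>x. \<alpha> x * \<beta> x) \<le> 4 * N\<^sup>2"
  proof (rule tendsto_lowerbound)
    show "\<forall>\<^sub>F c in at_right N. zyg_norm 1 (1/2) (\<lambda>x. \<alpha> x * \<beta> x) \<le> 4 * c\<^sup>2"
      using eventually_at_right_less
      by (rule eventually_mono) (use assms in \<open>auto simp: N_def intro: zyg_norm_mult_le\<close>)
  qed simp
qed

end
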